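(* Let $\Lambda$ be a rank-2 Bratteli diagram and let $x$ be an infinite path in $\Lambda$ such that $o(x(0,ne_1))\to\infty$ as $n\to\infty$. Then $x$ is aperiodic: whenever $p,q\in\mathbb N^2$ satisfy $\sigma^p(x)=\sigma^q(x)$, we have $p=q$.
   Context: A $2$-graph is a countable category $\Lambda$ with a functor $d:\Lambda\to\mathbb N^2$ satisfying unique factorisation (if $d(\lambda)=m+n$ there are unique $\mu,\nu$ with $d(\mu)=m,d(\nu)=n,\lambda=\mu\nu$). Vertices = degree-$0$ paths; $r,s$ range/source; $\Lambda^n=d^{-1}(n)$; $e_1=(1,0),e_2=(0,1)$; $vE=E\cap r^{-1}(v)$, $Ev=E\cap s^{-1}(v)$. Row-finite: each $v\Lambda^n$ finite. Blue paths: degree in $\mathbb Ne_1$; red paths: degree in $\mathbb Ne_2$. $\lambda(m,n)$ is the unique path with $\lambda=\lambda'\lambda(m,n)\lambda''$, $d(\lambda')=m$, $d(\lambda(m,n))=n-m$; $\lambda(n)=\lambda(n,n)$. A cycle: $d(\lambda)\ne0$, $r(\lambda)=s(\lambda)$, $\lambda(n)\ne s(\lambda)$ for $0<n<d(\lambda)$; isolated: no $n\le d(\lambda)$ with $r(\lambda)\Lambda^n\setminus\{\lambda(0,n)\}\ne\emptyset$ and no $n\le d(\lambda)$ with $\Lambda^ns(\lambda)\setminus\{\lambda(d(\lambda)-n,d(\lambda))\}\ne\emptyset$. A rank-2 Bratteli diagram of depth $N\in\mathbb N\cup\{\infty\}$ is a row-finite 2-graph with $\Lambda^0=\bigsqcup_{0\le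 n\le N}V_n$ (all $n\in\mathbb N$ if $N=\infty$), each $V_n$ nonempty finite, such that: every blue edge $e$ has $r(e)\in V_n,s(e)\in V_{n+1}$ for some $n$; every vertex $v$ with $\Lambda^{e_1}v=\emptyset$ lies in $V_0$ and every $v$ with $v\Lambda^{e_1}=\emptyset$ lies in $V_N$ (none if $N=\infty$); every vertex lies on an isolated cycle of red edges and every red edge has range and source in the same $V_n$. For a blue path $\alpha$, let $f$ be the unique red edge with $s(f)=r(\alpha)$ and $\mathcal F(\alpha)$ the unique blue path with $f\alpha=\mathcal F(\alpha)f'$ for a red edge $f'$; $o(\alpha)=\min\{k>0:\mathcal F^k(\alpha)=\alpha\}$. $\Omega_2$ is the 2-graph with objects $\mathbb N^2$, morphisms $(m,n)$ for $m\le n$, $r(m,n)=m,s(m,n)=n,d(m,n)=n-m$. An infinite path is a degree-preserving functor $x:\Omega_2\to\Lambda$; write $x(m,n)$ for the image of $(m,n)$; for $p\in\mathbb N^2$, $\sigma^p(x)$ is the infinite path $(m,n)\mapsto x(m+p,n+p)$. *)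

theory Defs
  imports Main "HOL-Library.Product_Plus" "HOL-Library.Product_Order"
    "HOL-Library.Countable_Set" "HOL-Library.Extended_Nat"
begin

text \<open>A 2-graph: morphisms form the set Mor of type 'a; objects are identified with
  the identity morphisms (degree-0 paths). cmp mu nu is the composite mu nu (first nu
  then mu, i.e. r (mu nu) = r mu, s (mu nu) = s nu), defined when s mu = r nu.\<close>

definition is_vertex :: "'a set \<Rightarrow> ('a \<Rightarrow> nat \<times> nat) \<Rightarrow> 'a \<Rightarrow> bool" where
  "is_vertex Mor d v \<longleftrightarrow> v \<in> Mor \<and> d v = 0"

definition two_graph ::
  "'a set \<Rightarrow> ('a \<Rightarrow> 'a) \<Rightarrow> ('a \<Rightarrow> 'a) \<Rightarrow> ('a \<Rightarrow> 'a \<Rightarrow> 'a) \<Rightarrow> ('a \<Rightarrow> nat \<times> nat) \<Rightarrow> bool" where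
  "two_graph Mor r s cmp d \<longleftrightarrow>
     countable Mor
   \<and> (\<forall>l\<in>Mor. r l \<in> Mor \<and> s l \<in> Mor \<and> d (r l) = 0 \<and> d (s l) = 0
        \<and> r (r l) = r l \<and> s (r l) = r l \<and> r (s l) = s l \<and> s (s l) = s l
        \<and> cmp (r l) l = l \<and> cmp l (s l) = l)
   \<and> (\<forall>mu\<in>Mor. \<forall>nu\<in>Mor. s mu = r nu \<longrightarrow>
        cmp mu nu \<in> Mor \<and> r (cmp mu nu) = r mu \<and> s (cmp mu nu) = s nu
        \<and> d (cmp mu nu) = d mu + d nu)
   \<and> (\<forall>a\<in>Mor. \<forall>b\<in>Mor. \<forall>c\<in>Mor. s a = r b \<and> s b = r c \<longrightarrow>
        cmp (cmp a b) c = cmp a (cmp b c))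
   \<and> (\<forall>l\<in>Mor. \<forall>m n. d l = m + n \<longrightarrow>
        (\<exists>!(mu, nu). mu \<in> Mor \<and> nu \<in> Mor \<and> s mu = r nu \<and> d mu = m \<and> d nu = n
                     \<and> l = cmp mu nu))"

definition row_finite :: "'a set \<Rightarrow> ('a \<Rightarrow> 'a) \<Rightarrow> ('a \<Rightarrow> nat \<times> nat) \<Rightarrow> bool" where
  "row_finite Mor r d \<longleftrightarrow>
     (\<forall>v n. is_vertex Mor d v \<longrightarrow> finite {l \<in> Mor. r l = v \<and> d l = n})"

text \<open>lambda(m,n): the unique path with lambda = lambda' lambda(m,n) lambda'',
  d lambda' = m, d lambda(m,n) = n - m (for m \<le> n \<le> d lambda).\<close>
definition seg :: "'a set \<Rightarrow> ('a \<Rightarrow> 'a) \<Rightarrow> ('a \<Rightarrow> 'a) \<Rightarrow> ('a \<Rightarrow> 'a \<Rightarrow> 'a) \<Rightarrow> ('a \<Rightarrow> nat \<times> nat)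
     \<Rightarrow> 'a \<Rightarrow> nat \<times> nat \<Rightarrow> nat \<times> nat \<Rightarrow> 'a" where
  "seg Mor r s cmp d l m n = (THE mu. \<exists>a b. a \<in> Mor \<and> mu \<in> Mor \<and> b \<in> Mor
      \<and> s a = r mu \<and> s mu = r b \<and> d a = m \<and> d mu = n - m
      \<and> l = cmp (cmp a mu) b)"

definition is_cycle :: "'a set \<Rightarrow> ('a \<Rightarrow> 'a) \<Rightarrow> ('a \<Rightarrow> 'a) \<Rightarrow> ('a \<Rightarrow> 'a \<Rightarrow> 'a) \<Rightarrow> ('a \<Rightarrow> nat \<times> nat)
     \<Rightarrow> 'a \<Rightarrow> bool" where
  "is_cycle Mor r s cmp d l \<longleftrightarrow> l \<in> Mor \<and> d l \<noteq> 0 \<and> r l = s l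
     \<and> (\<forall>n. 0 < n \<and> n < d l \<longrightarrow> seg Mor r s cmp d l n n \<noteq> s l)"

definition is_isolated_cycle :: "'a set \<Rightarrow> ('a \<Rightarrow> 'a) \<Rightarrow> ('a \<Rightarrow> 'a) \<Rightarrow> ('a \<Rightarrow> 'a \<Rightarrow> 'a)
     \<Rightarrow> ('a \<Rightarrow> nat \<times> nat) \<Rightarrow> 'a \<Rightarrow> bool" where
  "is_isolated_cycle Mor r s cmp d l \<longleftrightarrow> is_cycle Mor r s cmp d l
     \<and> \<not> (\<exists>n \<le> d l. {mu \<in> Mor. r mu = r l \<and> d mu = n} - {seg Mor r s cmp d l 0 n} \<noteq> {})
     \<and> \<not> (\<exists>n \<le> d l. {mu \<in> Mor. s mu = s l \<and> d mu = n}
                        - {seg Mor r s cmp d l (d l - n) (d l)} \<noteq> {})"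

abbreviation e1 :: "nat \<times> nat" where "e1 \<equiv> (1, 0)"
abbreviation e2 :: "nat \<times> nat" where "e2 \<equiv> (0, 1)"

text \<open>Rank-2 Bratteli diagram of depth N, with the vertex partition given by a level
  function: V_n = {v. level v = n}.\<close>
definition rank2_bratteli ::
  "'a set \<Rightarrow> ('a \<Rightarrow> 'a) \<Rightarrow> ('a \<Rightarrow> 'a) \<Rightarrow> ('a \<Rightarrow> 'a \<Rightarrow> 'a) \<Rightarrow> ('a \<Rightarrow> nat \<times> nat)
     \<Rightarrow> enat \<Rightarrow> ('a \<Rightarrow> nat) \<Rightarrow> bool" where
  "rank2_bratteli Mor r s cmp d N level \<longleftrightarrow>
     two_graph Mor r s cmp d \<and> row_finite Mor r d
   \<and> (\<forall>v. is_vertex Mor d v \<longrightarrow> enat (level v) \<le> N)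
   \<and> (\<forall>n. enat n \<le> N \<longrightarrow> finite {v. is_vertex Mor d v \<and> level v = n}
                          \<and> {v. is_vertex Mor d v \<and> level v = n} \<noteq> {})
   \<and> (\<forall>e\<in>Mor. d e = e1 \<longrightarrow> level (s e) = Suc (level (r e)))
   \<and> (\<forall>v. is_vertex Mor d v \<and> \<not> (\<exists>e\<in>Mor. d e = e1 \<and> s e = v) \<longrightarrow> level v = 0)
   \<and> (\<forall>v. is_vertex Mor d v \<and> \<not> (\<exists>e\<in>Mor. d e = e1 \<and> r e = v) \<longrightarrow> N = enat (level v))
   \<and> (\<forall>v. is_vertex Mor d v \<longrightarrow> (\<exists>l k. is_isolated_cycle Mor r s cmp d l
          \<and> d l = (0, k) \<and> (\<exists>n \<le> d l. v = seg Mor r s cmp d l n n)))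
   \<and> (\<forall>f\<in>Mor. d f = e2 \<longrightarrow> level (r f) = level (s f))"

text \<open>For a blue path alpha: f = the unique red edge with s f = r alpha, and
  F alpha = the unique blue path with f alpha = F(alpha) f' for a red edge f'.\<close>
definition red_into :: "'a set \<Rightarrow> ('a \<Rightarrow> 'a) \<Rightarrow> ('a \<Rightarrow> nat \<times> nat) \<Rightarrow> 'a \<Rightarrow> 'a" where
  "red_into Mor s d v = (THE f. f \<in> Mor \<and> d f = e2 \<and> s f = v)"

definition Fmap :: "'a set \<Rightarrow> ('a \<Rightarrow> 'a) \<Rightarrow> ('a \<Rightarrow> 'a) \<Rightarrow> ('a \<Rightarrow> 'a \<Rightarrow> 'a) \<Rightarrow> ('a \<Rightarrow> nat \<times> nat)
     \<Rightarrow> 'a \<Rightarrow> 'a" where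
  "Fmap Mor r s cmp d a = (THE b. b \<in> Mor \<and> (\<exists>k. d b = (k, 0)) \<and>
      (\<exists>f'. f' \<in> Mor \<and> d f' = e2 \<and> s b = r f'
            \<and> cmp (red_into Mor s d (r a)) a = cmp b f'))"

definition orb :: "'a set \<Rightarrow> ('a \<Rightarrow> 'a) \<Rightarrow> ('a \<Rightarrow> 'a) \<Rightarrow> ('a \<Rightarrow> 'a \<Rightarrow> 'a) \<Rightarrow> ('a \<Rightarrow> nat \<times> nat)
     \<Rightarrow> 'a \<Rightarrow> nat" where
  "orb Mor r s cmp d a = (LEAST k. 0 < k \<and> (Fmap Mor r s cmp d ^^ k) a = a)"

text \<open>Infinite path: degree-preserving functor Omega_2 \<rightarrow> Lambda, given by its values
  x m n on morphisms (m,n), m \<le> n (values for m \<not>\<le> n are irrelevant).\<close>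
definition infinite_path :: "'a set \<Rightarrow> ('a \<Rightarrow> 'a) \<Rightarrow> ('a \<Rightarrow> 'a) \<Rightarrow> ('a \<Rightarrow> 'a \<Rightarrow> 'a)
     \<Rightarrow> ('a \<Rightarrow> nat \<times> nat) \<Rightarrow> (nat \<times> nat \<Rightarrow> nat \<times> nat \<Rightarrow> 'a) \<Rightarrow> bool" where
  "infinite_path Mor r s cmp d x \<longleftrightarrow>
     (\<forall>m n. m \<le> n \<longrightarrow> x m n \<in> Mor \<and> d (x m n) = n - m
                       \<and> r (x m n) = x m m \<and> s (x m n) = x n n)
   \<and> (\<forall>m n p. m \<le> n \<and> n \<le> p \<longrightarrow> cmp (x m n) (x n p) = x m p)"

definition shift :: "nat \<times> nat \<Rightarrow> (nat \<times> nat \<Rightarrow> nat \<times> nat \<Rightarrow> 'a) \<Rightarrow> nat \<times> nat \<Rightarrow> nat \<times> nat \<Rightarrow> 'a" where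
  "shift p x = (\<lambda>m n. x (m + p) (n + p))"

definition path_eq :: "(nat \<times> nat \<Rightarrow> nat \<times> nat \<Rightarrow> 'a) \<Rightarrow> (nat \<times> nat \<Rightarrow> nat \<times> nat \<Rightarrow> 'a) \<Rightarrow> bool" where
  "path_eq x y \<longleftrightarrow> (\<forall>m n. m \<le> n \<longrightarrow> x m n = y m n)"

end

theory Submission imports Defs begin

(* Blue edges raise the level by one and red edges preserve it, so sigma^p x = sigma^q x forces
   p and q to have the same first coordinate; it remains to exclude a red period
   sigma^(a,b) x = sigma^(a,b+k) x with k > 0. Every vertex lies on an isolated red cycle, so it
   is the source of at most one red edge; hence F maps the blue segment x((c,j+1),(n,j+1)) of the
   path to x((c,j),(n,j)), and the period propagates down to x((a,j+k),(n,j+k)) = x((a,j),(n,j))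
   for all j. The heads x((0,tk),(a,tk)) lie in the finite set of blue paths of degree a e1
   starting at a fixed level, so two of them coincide, say for t = i0 < i1. With P = (i1-i0) k,
   F^P then fixes x(0, n e1) for every n >= a, contradicting o(x(0, n e1)) --> oo. *)

lemma two_graph_cmp:
  assumes "two_graph Mor r s cmp d" and "mu \<in> Mor" "nu \<in> Mor" "s mu = r nu"
  shows "cmp mu nu \<in> Mor" "r (cmp mu nu) = r mu" "s (cmp mu nu) = s nu"
    "d (cmp mu nu) = d mu + d nu"
  using assms unfolding two_graph_def by auto

lemma two_graph_range_source:
  assumes "two_graph Mor r s cmp d" and "l \<in> Mor"
  shows "r l \<in> Mor" "s l \<in> Mor" "d (r l) = 0" "d (s l) = 0"
    "r (r l) = r l" "s (r l) = r l" "r (s l) = s l" "s (s l) = s l"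
    "cmp (r l) l = l" "cmp l (s l) = l"
  using assms unfolding two_graph_def by auto

lemma two_graph_unique_factorisation:
  assumes "two_graph Mor r s cmp d" and "l \<in> Mor" "d l = m + n"
  shows "\<exists>!(mu, nu). mu \<in> Mor \<and> nu \<in> Mor \<and> s mu = r nu \<and> d mu = m \<and> d nu = n
      \<and> l = cmp mu nu"
proof -
  have "\<forall>l\<in>Mor. \<forall>m n. d l = m + n \<longrightarrow> (\<exists>!(mu, nu). mu \<in> Mor \<and> nu \<in> Mor
      \<and> s mu = r nu \<and> d mu = m \<and> d nu = n \<and> l = cmp mu nu)"
    using assms(1) unfolding two_graph_def by (elim conjE) assumption
  then show ?thesis using assms(2,3) by blast
qed

lemma two_graph_factorisation_exists:
  assumes "two_graph Mor r s cmp d" and "l \<in> Mor" "d l = m + n"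
  obtains mu nu where "mu \<in> Mor" "nu \<in> Mor" "s mu = r nu" "d mu = m" "d nu = n"
    "l = cmp mu nu"
  using ex1_implies_ex[OF two_graph_unique_factorisation[OF assms]] that by auto

lemma two_graph_factorisation_unique:
  assumes tg: "two_graph Mor r s cmp d"
    and "mu \<in> Mor" "nu \<in> Mor" "mu' \<in> Mor" "nu' \<in> Mor"
    and "s mu = r nu" "s mu' = r nu'" "d mu = d mu'" "d nu = d nu'"
    and "cmp mu nu = cmp mu' nu'"
  shows "mu = mu'" "nu = nu'"
proof -
  define P where "P = (\<lambda>(a, b). a \<in> Mor \<and> b \<in> Mor \<and> s a = r b \<and> d a = d mu
      \<and> d b = d nu \<and> cmp mu nu = cmp a b)"
  have "cmp mu nu \<in> Mor" "d (cmp mu nu) = d mu + d nu"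
    using two_graph_cmp[OF tg \<open>mu \<in> Mor\<close> \<open>nu \<in> Mor\<close> \<open>s mu = r nu\<close>] by auto
  then have unique: "\<exists>!p. P p"
    unfolding P_def by (rule two_graph_unique_factorisation[OF tg])
  have "P (mu, nu)" "P (mu', nu')"
    using assms unfolding P_def by simp_all
  then have "(mu, nu) = (mu', nu')"
    using the1_equality[OF unique] by metis
  then show "mu = mu'" "nu = nu'" by simp_all
qed

lemma two_graph_degree_zero:
  assumes tg: "two_graph Mor r s cmp d" and "mu \<in> Mor" "d mu = 0"
  shows "r mu = mu" "s mu = mu"
proof -
  note rs = two_graph_range_source[OF tg \<open>mu \<in> Mor\<close>]
  have "r mu = mu \<and> mu = s mu"
    using two_graph_factorisation_unique[OF tg, of "r mu" mu mu "s mu"] rs assms by auto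
  then show "r mu = mu" "s mu = mu" by auto
qed

lemma less_eq_prod_add_diff: "(n::nat \<times> nat) \<le> m \<Longrightarrow> m = n + (m - n)"
  by (cases n, cases m) auto

lemma seg_vertex_eq_source:
  assumes tg: "two_graph Mor r s cmp d" and "l \<in> Mor" "a \<in> Mor" "b \<in> Mor"
    and "s a = r b" "l = cmp a b"
  shows "seg Mor r s cmp d l (d a) (d a) = s a"
  unfolding seg_def
proof (rule the_equality)
  note rs = two_graph_range_source[OF tg \<open>a \<in> Mor\<close>]
  show "\<exists>a' b'. a' \<in> Mor \<and> s a \<in> Mor \<and> b' \<in> Mor \<and> s a' = r (s a) \<and> s (s a) = r b'
      \<and> d a' = d a \<and> d (s a) = d a - d a \<and> l = cmp (cmp a' (s a)) b'"
    using assms rs by (intro exI[of _ a] exI[of _ b]) auto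
next
  fix mu
  assume "\<exists>a' b'. a' \<in> Mor \<and> mu \<in> Mor \<and> b' \<in> Mor \<and> s a' = r mu \<and> s mu = r b'
      \<and> d a' = d a \<and> d mu = d a - d a \<and> l = cmp (cmp a' mu) b'"
  then obtain a' b' where a'b': "a' \<in> Mor" "mu \<in> Mor" "b' \<in> Mor" "s a' = r mu"
      "s mu = r b'" "d a' = d a" "d mu = 0" "l = cmp (cmp a' mu) b'"
    by auto
  have mu: "r mu = mu" "s mu = mu" using two_graph_degree_zero[OF tg a'b'(2,7)] by auto
  then have l: "l = cmp a' b'" "s a' = r b'"
    using a'b' two_graph_range_source(10)[OF tg a'b'(1)] by auto
  have "d b' = d b"
    using two_graph_cmp(4)[OF tg a'b'(1,3) l(2)] two_graph_cmp(4)[OF tg assms(3,4,5)]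
      a'b'(6) assms(6) l(1) by simp
  then have "a' = a"
    using two_graph_factorisation_unique(1)[OF tg a'b'(1,3) assms(3,4) l(2) assms(5)]
      a'b'(6) assms(6) l(1) by simp
  then show "mu = s a" using a'b'(4) mu by simp
qed

lemma rank2_bratteliD:
  assumes "rank2_bratteli Mor r s cmp d N level"
  shows "two_graph Mor r s cmp d" "row_finite Mor r d"
    and "is_vertex Mor d v \<Longrightarrow> enat (level v) \<le> N"
    and "enat n \<le> N \<Longrightarrow> finite {v. is_vertex Mor d v \<and> level v = n}"
    and "e \<in> Mor \<Longrightarrow> d e = e1 \<Longrightarrow> level (s e) = Suc (level (r e))"
    and "f \<in> Mor \<Longrightarrow> d f = e2 \<Longrightarrow> level (r f) = level (s f)"
    and "is_vertex Mor d v \<Longrightarrow> \<exists>l k. is_isolated_cycle Mor r s cmp d l \<and> d l = (0, k)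
           \<and> (\<exists>n \<le> d l. v = seg Mor r s cmp d l n n)"
  using assms unfolding rank2_bratteli_def by blast+

lemma isolated_cycle_path_into_source_unique:
  assumes "is_isolated_cycle Mor r s cmp d l"
    and "mu \<in> Mor" "s mu = s l" "d mu \<le> d l"
  shows "mu = seg Mor r s cmp d l (d l - d mu) (d l)"
  using assms unfolding is_isolated_cycle_def by blast

lemma rank2_bratteli_red_edge_into_unique:
  assumes rb: "rank2_bratteli Mor r s cmp d N level"
    and e: "e \<in> Mor" "d e = e2" and e': "e' \<in> Mor" "d e' = e2" and "s e = s e'"
  shows "e = e'"
proof -
  have tg: "two_graph Mor r s cmp d" by (rule rank2_bratteliD(1)[OF rb])
  have "is_vertex Mor d (s e)"
    using two_graph_range_source[OF tg e(1)] unfolding is_vertex_def by simp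
  then obtain l K n0 where iso: "is_isolated_cycle Mor r s cmp d l" and dl: "d l = (0, K)"
    and "n0 \<le> d l" "s e = seg Mor r s cmp d l n0 n0"
    using rank2_bratteliD(7)[OF rb] by blast
  have l: "l \<in> Mor" "d l \<noteq> 0" "r l = s l"
    using iso unfolding is_isolated_cycle_def is_cycle_def by auto
  note tail_unique = isolated_cycle_path_into_source_unique[OF iso]
  note rs = two_graph_range_source[OF tg l(1)]
  obtain n where n: "n \<noteq> 0" "n \<le> d l" "s e = seg Mor r s cmp d l n n"
  proof (cases "n0 = 0")
    case True
    txt \<open>Move the point to the end of the cycle: \<open>\<lambda>(0) = r \<lambda> = s \<lambda> = \<lambda>(d \<lambda>)\<close>.\<close>
    have "seg Mor r s cmp d l 0 0 = s l"
      using seg_vertex_eq_source[OF tg l(1) rs(1) l(1)] rs l(3) by simp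
    moreover have "seg Mor r s cmp d l (d l) (d l) = s l"
      using seg_vertex_eq_source[OF tg l(1) l(1) rs(2)] rs by simp
    ultimately show thesis
      using that[of "d l"] l(2) True \<open>s e = seg Mor r s cmp d l n0 n0\<close> by simp
  next
    case False
    then show thesis using that \<open>n0 \<le> d l\<close> \<open>s e = seg Mor r s cmp d l n0 n0\<close> by blast
  qed
  obtain a b where ab: "a \<in> Mor" "b \<in> Mor" "s a = r b" "d a = n" "d b = d l - n"
    "l = cmp a b"
    using two_graph_factorisation_exists[OF tg l(1) less_eq_prod_add_diff[OF n(2)]] by blast
  have "s a = s e" using seg_vertex_eq_source[OF tg l(1) ab(1,2,3,6)] ab(4) n(3) by simp
  have sb: "s b = s l" using two_graph_cmp(3)[OF tg ab(1,2,3)] ab(6) by simp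
  have "e2 + d b \<le> d l" using n(1,2) ab(5) dl by (cases n) (auto simp: zero_prod_def)
  moreover have "s e = r b" "s e' = r b" using \<open>s a = s e\<close> \<open>s e = s e'\<close> ab(3) by simp_all
  txt \<open>By isolation, \<open>e b\<close> and \<open>e' b\<close> are both the unique path of their degree into \<open>s \<lambda>\<close>.\<close>
  ultimately have "cmp e b = seg Mor r s cmp d l (d l - (e2 + d b)) (d l)"
      "cmp e' b = seg Mor r s cmp d l (d l - (e2 + d b)) (d l)"
    using tail_unique[of "cmp e b"] tail_unique[of "cmp e' b"] sb e(2) e'(2)
      two_graph_cmp[OF tg e(1) ab(2)] two_graph_cmp[OF tg e'(1) ab(2)] by simp_all
  then show "e = e'"
    using two_graph_factorisation_unique(1)[OF tg e(1) ab(2) e'(1) ab(2)]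
      \<open>s a = s e\<close> \<open>s e = s e'\<close> ab(3) e(2) e'(2) by simp
qed

lemma rank2_bratteli_red_into_eq:
  assumes "rank2_bratteli Mor r s cmp d N level" and "f \<in> Mor" "d f = e2"
  shows "red_into Mor s d (s f) = f"
  unfolding red_into_def
  using rank2_bratteli_red_edge_into_unique[OF assms(1) _ _ assms(2,3)] assms(2,3)
  by (intro the_equality) simp_all

lemma finite_range_repeats:
  fixes f :: "nat \<Rightarrow> 'b"
  assumes "finite (range f)"
  obtains i j where "i < j" "f i = f j"
proof -
  have "\<not> inj f"
    using assms finite_imageD infinite_UNIV_nat by blast
  then obtain i j where "i \<noteq> j" "f i = f j" unfolding inj_def by blast
  then show thesis using that[of i j] that[of j i] by (cases "i < j") auto
qed

locale bratteli_path =
  fixes Mor :: "'a set" and r s :: "'a \<Rightarrow> 'a" and cmp :: "'a \<Rightarrow> 'a \<Rightarrow> 'a"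
    and d :: "'a \<Rightarrow> nat \<times> nat" and N :: enat and level :: "'a \<Rightarrow> nat"
    and x :: "nat \<times> nat \<Rightarrow> nat \<times> nat \<Rightarrow> 'a"
  assumes bratteli: "rank2_bratteli Mor r s cmp d N level"
    and path: "infinite_path Mor r s cmp d x"
begin

abbreviation F :: "'a \<Rightarrow> 'a" where
  "F \<equiv> Fmap Mor r s cmp d"

lemma is_two_graph: "two_graph Mor r s cmp d"
  by (rule rank2_bratteliD(1)[OF bratteli])

lemma path_segment:
  assumes "m \<le> n"
  shows "x m n \<in> Mor" "d (x m n) = n - m" "r (x m n) = x m m" "s (x m n) = x n n"
  using path assms unfolding infinite_path_def by blast+

lemma path_cmp: "m \<le> n \<Longrightarrow> n \<le> p \<Longrightarrow> cmp (x m n) (x n p) = x m p"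
  using path unfolding infinite_path_def by blast

lemma path_vertex: "is_vertex Mor d (x m m)"
  using path_segment[of m m] unfolding is_vertex_def by (simp add: zero_prod_def)

lemma level_path_vertex: "level (x (a, b) (a, b)) = level (x (0, 0) (0, 0)) + a"
proof -
  have red: "level (x (a, b) (a, b)) = level (x (a, 0) (a, 0))" for a b
  proof (induction b)
    case (Suc b)
    have "level (r (x (a, b) (a, Suc b))) = level (s (x (a, b) (a, Suc b)))"
      by (rule rank2_bratteliD(6)[OF bratteli]) (use path_segment[of "(a, b)" "(a, Suc b)"] in auto)
    then show ?case using Suc path_segment[of "(a, b)" "(a, Suc b)"] by simp
  qed simp
  have blue: "level (x (a, 0) (a, 0)) = level (x (0, 0) (0, 0)) + a" for a
  proof (induction a)
    case (Suc a)
    have "level (s (x (a, 0) (Suc a, 0))) = Suc (level (r (x (a, 0) (Suc a, 0))))"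
      by (rule rank2_bratteliD(5)[OF bratteli]) (use path_segment[of "(a, 0)" "(Suc a, 0)"] in auto)
    then show ?case using Suc path_segment[of "(a, 0)" "(Suc a, 0)"] by simp
  qed simp
  show ?thesis using red[of a b] blue[of a] by simp
qed

text \<open>The square of the path with red sides \<open>x((c,j),(c,j+1))\<close> and \<open>x((n,j),(n,j+1))\<close>
  is exactly the factorisation defining \<open>F\<close>.\<close>
lemma Fmap_path:
  assumes "c \<le> n"
  shows "F (x (c, Suc j) (n, Suc j)) = x (c, j) (n, j)"
proof -
  define \<alpha> where "\<alpha> = x (c, Suc j) (n, Suc j)"
  define \<beta> where "\<beta> = x (c, j) (n, j)"
  define f where "f = x (c, j) (c, Suc j)"
  define g where "g = x (n, j) (n, Suc j)"
  have \<alpha>: "\<alpha> \<in> Mor" "r \<alpha> = s f"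
    using path_segment[of "(c, Suc j)" "(n, Suc j)"] path_segment[of "(c, j)" "(c, Suc j)"] assms
    unfolding \<alpha>_def f_def by auto
  have f: "f \<in> Mor" "d f = e2"
    using path_segment[of "(c, j)" "(c, Suc j)"] unfolding f_def by auto
  have \<beta>: "\<beta> \<in> Mor" "d \<beta> = (n - c, 0)"
    using path_segment[of "(c, j)" "(n, j)"] assms unfolding \<beta>_def by auto
  have g: "g \<in> Mor" "d g = e2" "s \<beta> = r g"
    using path_segment[of "(n, j)" "(n, Suc j)"] path_segment[of "(c, j)" "(n, j)"] assms
    unfolding g_def \<beta>_def by auto
  have square: "cmp f \<alpha> = cmp \<beta> g"
    using path_cmp[of "(c, j)" "(c, Suc j)" "(n, Suc j)"] path_cmp[of "(c, j)" "(n, j)" "(n, Suc j)"]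
      assms unfolding \<alpha>_def \<beta>_def f_def g_def by simp
  have red: "red_into Mor s d (r \<alpha>) = f"
    unfolding \<alpha>(2) by (rule rank2_bratteli_red_into_eq[OF bratteli f])
  have "F \<alpha> = \<beta>"
    unfolding Fmap_def red
  proof (intro the_equality)
    fix \<beta>' assume "\<beta>' \<in> Mor \<and> (\<exists>k. d \<beta>' = (k, 0)) \<and>
      (\<exists>g'. g' \<in> Mor \<and> d g' = e2 \<and> s \<beta>' = r g' \<and> cmp f \<alpha> = cmp \<beta>' g')"
    then obtain k g' where \<beta>': "\<beta>' \<in> Mor" "d \<beta>' = (k, 0)" "g' \<in> Mor" "d g' = e2"
      "s \<beta>' = r g'" "cmp \<beta>' g' = cmp \<beta> g"
      using square by auto
    have "(k, 1) = (n - c, 1)"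
      using two_graph_cmp(4)[OF is_two_graph \<beta>'(1,3,5)] two_graph_cmp(4)[OF is_two_graph \<beta>(1) g(1,3)]
        \<beta>' \<beta> g by simp
    then show "\<beta>' = \<beta>"
      using two_graph_factorisation_unique(1)[OF is_two_graph \<beta>'(1,3) \<beta>(1) g(1)] \<beta>' \<beta> g by simp
  qed (use \<beta> g square in blast)
  then show ?thesis unfolding \<alpha>_def \<beta>_def .
qed

lemma funpow_Fmap_path:
  assumes "c \<le> n"
  shows "(F ^^ i) (x (c, j + i) (n, j + i)) = x (c, j) (n, j)"
proof (induction i)
  case (Suc i)
  then show ?case
    using Fmap_path[OF assms, of "j + i"] by (simp add: funpow_Suc_right del: funpow.simps)
qed simp

lemma finite_range_path_segments:
  assumes "c \<le> n"
  shows "finite (range (\<lambda>j. x (c, j) (n, j)))"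
proof -
  define V where "V = {v. is_vertex Mor d v \<and> level v = level (x (c, 0) (c, 0))}"
  define S where "S = (\<Union>v\<in>V. {l \<in> Mor. r l = v \<and> d l = (n - c, 0)})"
  have "finite V"
    using rank2_bratteliD(3,4)[OF bratteli] path_vertex unfolding V_def by blast
  then have "finite S"
    using rank2_bratteliD(2)[OF bratteli] unfolding S_def V_def row_finite_def by blast
  moreover have "x (c, j) (n, j) \<in> S" for j
    using path_segment[of "(c, j)" "(n, j)"] path_vertex[of "(c, j)"] assms
      level_path_vertex[of c j] level_path_vertex[of c 0]
    unfolding S_def V_def by auto
  ultimately show ?thesis by (meson finite_subset image_subsetI)
qed

lemma shift_eq_periodic:
  assumes eq: "path_eq (shift (a, b) x) (shift (a, b + k) x)" and "a \<le> n"
  shows "x (a, j + k) (n, j + k) = x (a, j) (n, j)"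
proof -
  define i where "i = b - j"
  have "b \<le> j + i" unfolding i_def by simp
  have "shift (a, b) x (0, j + i - b) (n - a, j + i - b)
      = shift (a, b + k) x (0, j + i - b) (n - a, j + i - b)"
    using eq unfolding path_eq_def by simp
  then have "x (a, (j + i) + k) (n, (j + i) + k) = x (a, j + i) (n, j + i)"
    using \<open>b \<le> j + i\<close> \<open>a \<le> n\<close> unfolding shift_def by (simp add: algebra_simps)
  then have "(F ^^ i) (x (a, (j + k) + i) (n, (j + k) + i)) = (F ^^ i) (x (a, j + i) (n, j + i))"
    by (simp add: algebra_simps)
  then show ?thesis using funpow_Fmap_path[OF \<open>a \<le> n\<close>] by simp
qed

lemma shift_eq_periodic_multiple:
  assumes "path_eq (shift (a, b) x) (shift (a, b + k) x)" and "a \<le> n"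
  shows "x (a, t * k) (n, t * k) = x (a, 0) (n, 0)"
proof (induction t)
  case (Suc t)
  then show ?case
    using shift_eq_periodic[OF assms, of "t * k"] by (simp add: add.commute)
qed simp

lemma shift_eq_imp_orb_bounded:
  assumes eq: "path_eq (shift (a, b) x) (shift (a, b + k) x)" and "0 < k"
  obtains P where "\<And>n. a \<le> n \<Longrightarrow> orb Mor r s cmp d (x (0, 0) (n, 0)) \<le> P"
proof -
  have "finite (range (\<lambda>t. x (0, t * k) (a, t * k)))"
    using finite_range_path_segments[of 0 a] by (rule finite_subset[rotated]) auto
  then obtain i0 i1 where "i0 < i1" and repeat: "x (0, i0 * k) (a, i0 * k) = x (0, i1 * k) (a, i1 * k)"
    by (rule finite_range_repeats)
  define P where "P = (i1 - i0) * k"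
  have "0 < P" using \<open>i0 < i1\<close> \<open>0 < k\<close> unfolding P_def by simp
  have "P + i0 * k = i1 * k"
    using \<open>i0 < i1\<close> unfolding P_def by (simp add: algebra_simps diff_mult_distrib)
  then have head: "x (0, P) (a, P) = x (0, 0) (a, 0)"
    using funpow_Fmap_path[of 0 a "i0 * k" P] funpow_Fmap_path[of 0 a "i0 * k" 0] repeat by simp
  have "(F ^^ P) (x (0, 0) (n, 0)) = x (0, 0) (n, 0)" if "a \<le> n" for n
  proof -
    have "x (0, P) (n, P) = cmp (x (0, P) (a, P)) (x (a, P) (n, P))"
      using path_cmp[of "(0, P)" "(a, P)" "(n, P)"] \<open>a \<le> n\<close> by simp
    also have "\<dots> = cmp (x (0, 0) (a, 0)) (x (a, 0) (n, 0))"
      using head shift_eq_periodic_multiple[OF eq \<open>a \<le> n\<close>, of "i1 - i0"] unfolding P_def by simp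
    also have "\<dots> = x (0, 0) (n, 0)"
      using path_cmp[of "(0, 0)" "(a, 0)" "(n, 0)"] \<open>a \<le> n\<close> by simp
    finally show ?thesis using funpow_Fmap_path[of 0 n P 0] by simp
  qed
  then have "orb Mor r s cmp d (x (0, 0) (n, 0)) \<le> P" if "a \<le> n" for n
    unfolding orb_def using \<open>0 < P\<close> that by (intro Least_le) simp
  then show thesis by (rule that)
qed

lemma shift_eq_imp_fst_eq:
  assumes "path_eq (shift p x) (shift q x)"
  shows "fst p = fst q"
proof -
  have "x p p = x q q"
    using assms unfolding path_eq_def shift_def by (metis add_0 order_refl)
  then show ?thesis
    using level_path_vertex[of "fst p" "snd p"] level_path_vertex[of "fst q" "snd q"] by simp
qed

end

theorem lemma5p4:
  fixes Mor :: "'a set" and r s :: "'a \<Rightarrow> 'a" and cmp :: "'a \<Rightarrow> 'a \<Rightarrow> 'a"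
    and d :: "'a \<Rightarrow> nat \<times> nat" and N :: enat and level :: "'a \<Rightarrow> nat"
    and x :: "nat \<times> nat \<Rightarrow> nat \<times> nat \<Rightarrow> 'a"
  assumes "rank2_bratteli Mor r s cmp d N level"
    and "infinite_path Mor r s cmp d x"
    and "filterlim (\<lambda>n. orb Mor r s cmp d (x (0, 0) (n, 0))) at_top sequentially"
  shows "\<forall>p q. path_eq (shift p x) (shift q x) \<longrightarrow> p = q"
proof (intro allI impI)
  interpret bratteli_path Mor r s cmp d N level x
    using assms(1,2) by unfold_locales
  have no_period: "\<not> path_eq (shift (a, b) x) (shift (a, b + k) x)" if "0 < k" for a b k
  proof
    assume "path_eq (shift (a, b) x) (shift (a, b + k) x)"
    then obtain P where "\<And>n. a \<le> n \<Longrightarrow> orb Mor r s cmp d (x (0, 0) (n, 0)) \<le> P"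
      using shift_eq_imp_orb_bounded \<open>0 < k\<close> by blast
    moreover obtain n where "a \<le> n" "Suc P \<le> orb Mor r s cmp d (x (0, 0) (n, 0))"
      using assms(3) unfolding filterlim_at_top eventually_sequentially
      by (metis le_cases order.trans)
    ultimately show False by fastforce
  qed
  fix p q
  assume eq: "path_eq (shift p x) (shift q x)"
  then obtain a b b' where pq: "p = (a, b)" "q = (a, b')"
    using shift_eq_imp_fst_eq by (metis prod.collapse)
  have "path_eq (shift q x) (shift p x)"
    using eq unfolding path_eq_def by simp
  then show "p = q"
    using eq no_period[of "b' - b" a b] no_period[of "b - b'" a b'] unfolding pq
    by (cases b b' rule: linorder_cases) auto
qed

end
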